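(* In the setting below, the vector $$\begin{aligned}U=&\tfrac16\big[(-\lambda_1+\lambda_6)(-1)^3+(\lambda_3-\lambda_5)(-1)^3+(\lambda_1-\lambda_3+\lambda_5-\lambda_6)(-1)^3\big]\otimes e^0\\&+\tfrac12(\lambda_3-\lambda_5)(-1)\otimes\big(e^{\alpha_1-\alpha_6}+e^{-\alpha_1+\alpha_6}\big)+\tfrac12(-\lambda_1+\lambda_6)(-1)\otimes\big(e^{\alpha_3-\alpha_5}+e^{-\alpha_3+\alpha_5}\big)\\&+\tfrac12(-\lambda_1+\lambda_3-\lambda_5+\lambda_6)(-1)\otimes\big(e^{\alpha_1+\alpha_3-\alpha_5-\alpha_6}+e^{-\alpha_1-\alpha_3+\alpha_5+\alpha_6}\big)\in V^{\Lambda_0}\end{aligned}$$ is nonzero and is a highest weight vector of type $Vir(\tfrac45,3)\otimes W^{\Omega_0}$, i.e. it satisfies (HW1)–(HW5) with $h=3$ and $\omega_j=0$.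
   Context: Setting. $Q$ is the $E_6$ root lattice with simple roots $\alpha_1,\dots,\alpha_6$ (Dynkin chain $\alpha_1-\alpha_3-\alpha_4-\alpha_5-\alpha_6$, $\alpha_2$ attached to $\alpha_4$), form from the Cartan matrix, fundamental weights $\lambda_i$, $P=\bigoplus\mathbb Z\lambda_i$, $\mathfrak h=\mathbb C\otimes P$. $\varepsilon$ bimultiplicative on $P$ with $[\varepsilon(\lambda_i,\lambda_j)]$ rows $(1,1,1,1,1,1)$, $(-1,1,1,1,1,-1)$, $(-1,1,1,1,1,1)$, $(1,-1,1,1,1,1)$, $(1,1,1,1,1,-1)$, $(1,1,1,1,1,1)$. $V_P=S(\hat{\mathfrak h}^-)\otimes\mathbb C[P]$ with Heisenberg operators $h(n)$ ($[h(m),h'(n)]=m\langle h,h'\rangle\delta_{m+n,0}$, $h(n)1=0$ for $n>0$, $h(0)(u\otimes e^\beta)=\langle h,\beta\rangle u\otimes e^\beta$). For $\alpha\in Q$: $Y(1\otimes e^\alpha,z)=\exp(\sum_{k\ge1}\frac{\alpha(-k)}kz^k)\exp(-\sum_{k\ge1}\frac{\alpha(k)}kz^{-k})e_\alpha z^{\alpha(0)}=\sum_n\{1\otimes e^\alpha\}_nz^{-n-1}$, $e_\alpha(u\otimes e^\beta)=\varepsilon(\alpha,\beta)u\otimes e^{\alpha+\beta}$, $z^{\alpha(0)}(u\otimes e^\beta)=z^{\langle\alpha,\beta\rangle}u\otimes e^\beta$; for general vectors $Y(h_1(-n_1-1)\cdots h_k(-n_k-1)\otimes e^\alpha,z)=\,:h_1^{(n_1)}(z)\cdots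 h_k^{(n_k)}(z)Y(1\otimes e^\alpha,z):$, $h^{(n)}(z)=\frac1{n!}(\frac d{dz})^n\sum_mh(m)z^{-m-1}$, annihilators to the right. $V^{\Lambda_0}=S(\hat{\mathfrak h}^-)\otimes\mathbb C[Q]$. $\tau$: $\alpha_1\leftrightarrow\alpha_6$, $\alpha_3\leftrightarrow\alpha_5$; $\mathrm{Proj}(\nu)=(\nu+\tau\nu)/2$. $\theta=\alpha_1+2\alpha_2+2\alpha_3+3\alpha_4+2\alpha_5+\alpha_6$. Raising operators of $\tilde{\mathfrak a}$ ($F_4^{(1)}$): $\{\beta_1\}_0=\{1\otimes e^{\alpha_2}\}_0$, $\{\beta_2\}_0=\{1\otimes e^{\alpha_4}\}_0$, $\{\beta_3\}_0=\{1\otimes e^{\alpha_3}\}_0+\{1\otimes e^{\alpha_5}\}_0$, $\{\beta_4\}_0=\{1\otimes e^{\alpha_1}\}_0+\{1\otimes e^{\alpha_6}\}_0$, $\{1\otimes e^{-\theta}\}_1$. Coset conformal vector $\omega=\frac1{10}[(-\lambda_1+\lambda_6)(-1)^2+(\lambda_3-\lambda_5)(-1)^2+(\lambda_1-\lambda_3+\lambda_5-\lambda_6)(-1)^2]\otimes e^0+\frac15(-1\otimes e^{\pm\gamma_1}-1\otimes e^{\pm\gamma_2}+1\otimes e^{\pm\gamma_3})$, $\gamma_1=\alpha_1-\alpha_6$, $\gamma_2=\alpha_3-\alpha_5$, $\gamma_3=\gamma_1+\gamma_2$, $1\otimes e^{\pm\gamma}:=1\otimes e^\gamma+1\otimes e^{-\gamma}$;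 $L(n)=\{\omega\}_{n+1}$ (Virasoro, $c=4/5$, commuting with $\tilde{\mathfrak a}$). $\Omega_0$ is the basic level one $F_4^{(1)}$ weight, $W^{\Omega_0}$ its irreducible module. A nonzero $v$ is a highest weight vector of type $Vir(\frac45,h)\otimes W^{\Omega_j}$ if (HW1) $\{1\otimes e^{-\theta}\}_1v=0$; (HW2) $\{\beta_i\}_0v=0$, $i=1,\dots,4$; (HW3) $L(1)v=L(2)v=0$; (HW4) $L(0)v=hv$; (HW5) $v\in\bigoplus_kS(\hat{\mathfrak h}^-)\otimes e^{\nu_k}$ with $\mathrm{Proj}(\nu_k)=\omega_j$ ($\omega_0=0$). In the paper $U$ is constructed as $\{R\}_{-8/3}\cdot\tau R-\frac52\{\omega\}_{-2}(1\otimes e^0)$, with $\{R\}_n$ the modes of an intertwining operator for $R=1\otimes e^{-\lambda_1+\lambda_6}+1\otimes e^{\lambda_3-\lambda_5}-1\otimes e^{\lambda_1-\lambda_3+\lambda_5-\lambda_6}$; the explicit expression above is that vector. *)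

theory Defs
  imports Complex_Main "HOL-Library.Multiset" "HOL-Library.Function_Algebras"
begin

text \<open>L1..L6 index the simple roots alpha_1..alpha_6 and fundamental weights
  lambda_1..lambda_6 (Bourbaki numbering: chain 1-3-4-5-6, node 2 attached to 4).\<close>

datatype ix = L1 | L2 | L3 | L4 | L5 | L6

lemma UNIV_ix: "(UNIV :: ix set) = {L1, L2, L3, L4, L5, L6}"
  by (auto intro: ix.exhaust)

instance ix :: finite
  by standard (simp add: UNIV_ix)

fun ixn :: "ix \<Rightarrow> nat" where
  "ixn L1 = 0" | "ixn L2 = 1" | "ixn L3 = 2" | "ixn L4 = 3" | "ixn L5 = 4" | "ixn L6 = 5"

definition adj :: "ix \<Rightarrow> ix \<Rightarrow> bool" where
  "adj i j \<longleftrightarrow> {i, j} \<in> {{L1, L3}, {L3, L4}, {L4, L5}, {L5, L6}, {L2, L4}}"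

definition cartan :: "ix \<Rightarrow> ix \<Rightarrow> int" where
  "cartan i j = (if i = j then 2 else if adj i j then -1 else 0)"

text \<open>Elements of P are written in the basis of fundamental weights:
  nu = sum_i nu(i) lambda_i.\<close>
type_synonym lat = "ix \<Rightarrow> int"

text \<open>Elements of h = C (x) P in the basis of fundamental weights.\<close>
type_synonym hvec = "ix \<Rightarrow> complex"

text \<open>Gram matrix <lambda_i, lambda_j> of the form (= inverse of the Cartan matrix;
  see lemma ginv_cartan below, which shows <lambda_i, alpha_j> = delta_ij).\<close>
definition ginv :: "ix \<Rightarrow> ix \<Rightarrow> rat" where
  "ginv i j = of_int ([[4,3,5,6,4,2],[3,6,6,9,6,3],[5,6,10,12,8,4],
                      [6,9,12,18,12,6],[4,6,8,12,10,5],[2,3,4,6,5,4]] ! ixn i ! ixn j) / 3"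

lemma ginv_cartan:
  "(\<Sum>k\<in>UNIV. ginv i k * of_int (cartan k j)) = (if i = j then 1 else 0)"
  by (cases i; cases j) (simp_all add: UNIV_ix ginv_def cartan_def adj_def doubleton_eq_iff)

definition alpha :: "ix \<Rightarrow> lat" where
  "alpha j = (\<lambda>i. cartan j i)"

definition rootlat :: "lat set" where
  "rootlat = {nu. \<exists>c :: ix \<Rightarrow> int. nu = (\<lambda>i. \<Sum>j\<in>UNIV. c j * alpha j i)}"

definition hofl :: "lat \<Rightarrow> hvec" where
  "hofl nu = (\<lambda>i. of_int (nu i))"

definition lam :: "ix \<Rightarrow> lat" where
  "lam i = (\<lambda>j. if j = i then 1 else 0)"

definition ip :: "hvec \<Rightarrow> hvec \<Rightarrow> complex" where
  "ip x y = (\<Sum>i\<in>UNIV. \<Sum>j\<in>UNIV. x i * y j * of_rat (ginv i j))"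

definition lip :: "lat \<Rightarrow> lat \<Rightarrow> rat" where
  "lip x y = (\<Sum>i\<in>UNIV. \<Sum>j\<in>UNIV. of_int (x i * y j) * ginv i j)"

definition epsmat :: "ix \<Rightarrow> ix \<Rightarrow> complex" where
  "epsmat i j = of_int ([[1,1,1,1,1,1],[-1,1,1,1,1,-1],[-1,1,1,1,1,1],
                        [1,-1,1,1,1,1],[1,1,1,1,1,-1],[1,1,1,1,1,1]] ! ixn i ! ixn j)"

definition eps :: "lat \<Rightarrow> lat \<Rightarrow> complex" where
  "eps mu nu = (\<Prod>i\<in>UNIV. \<Prod>j\<in>UNIV. epsmat i j powi (mu i * nu j))"

text \<open>A monomial in S(h^-) is a multiset of pairs (i,k) standing for lambda_i(-k-1).
  A basis vector of V_P is (M, beta) = M (x) e^beta.  A vector is a finitely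
  supported complex-valued function on basis vectors.\<close>
type_synonym mon = "(ix \<times> nat) multiset"
type_synonym basis = "mon \<times> lat"
type_synonym vec = "basis \<Rightarrow> complex"

definition bv :: "basis \<Rightarrow> vec" where
  "bv b = (\<lambda>b'. if b' = b then 1 else 0)"

definition smul :: "complex \<Rightarrow> vec \<Rightarrow> vec" where
  "smul c v = (\<lambda>b. c * v b)"

definition lext :: "(basis \<Rightarrow> vec) \<Rightarrow> vec \<Rightarrow> vec" where
  "lext f v = (\<lambda>b'. \<Sum>b\<in>{b. v b \<noteq> 0}. v b * f b b')"

text \<open>Heisenberg operators h(-n) (n >= 1): multiplication by h(-n).\<close>
definition cr :: "hvec \<Rightarrow> nat \<Rightarrow> vec \<Rightarrow> vec" where
  "cr h n = lext (\<lambda>(M, beta). \<Sum>i\<in>UNIV. smul (h i) (bv (M + {#(i, n - 1)#}, beta)))"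

text \<open>Heisenberg operators h(n) (n >= 1): the derivation with
  [h(n), lambda_i(-n)] = n <h, lambda_i>, killing 1.\<close>
definition an :: "hvec \<Rightarrow> nat \<Rightarrow> vec \<Rightarrow> vec" where
  "an h n = lext (\<lambda>(M, beta). \<Sum>i\<in>UNIV.
      smul (of_nat n * ip h (hofl (lam i)) * of_nat (count M (i, n - 1)))
           (bv (M - {#(i, n - 1)#}, beta)))"

definition zm :: "hvec \<Rightarrow> vec \<Rightarrow> vec" where
  "zm h = lext (\<lambda>(M, beta). smul (ip h (hofl beta)) (bv (M, beta)))"

definition hm :: "hvec \<Rightarrow> int \<Rightarrow> vec \<Rightarrow> vec" where
  "hm h m = (if m < 0 then cr h (nat (- m)) else if m = 0 then zm h else an h (nat m))"

text \<open>Degree (L(0)-weight of the Heisenberg part) of a monomial.\<close>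
definition wt :: "mon \<Rightarrow> nat" where
  "wt M = (\<Sum>x\<in>#M. snd x + 1)"

text \<open>Coefficient of w^b in exp(sum_{k>=1} x_k w^k / k), written out literally:
  sum over n of 1/n! times the sum over ordered compositions (k_1,...,k_n) of b of
  (x_{k_1}/k_1) ... (x_{k_n}/k_n).\<close>
definition comps :: "nat \<Rightarrow> nat list set" where
  "comps b = {ks. sum_list ks = b \<and> 0 \<notin> set ks}"

definition expco :: "(nat \<Rightarrow> vec \<Rightarrow> vec) \<Rightarrow> nat \<Rightarrow> vec \<Rightarrow> vec" where
  "expco x b v = (\<Sum>ks\<in>comps b. smul (1 / of_nat (fact (length ks)))
       (foldr (\<lambda>k f. (\<lambda>w. smul (1 / of_nat k) (x k w)) \<circ> f) ks id v))"

text \<open>Modes {1 (x) e^alpha}_n of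
  Y(1 (x) e^alpha, z) = exp(sum alpha(-k) z^k / k) exp(-sum alpha(k) z^-k / k) e_alpha z^alpha(0).
  On M (x) e^beta the z-power is z^(b - a + <alpha,beta>) for the coefficient of z^b of the
  first exponential and of z^-a of the second; the second one vanishes on M for a > wt M.
  (For alpha in Q, <alpha, beta> is an integer.)\<close>
definition emode :: "lat \<Rightarrow> int \<Rightarrow> vec \<Rightarrow> vec" where
  "emode a n = lext (\<lambda>(M, beta).
     smul (eps a beta)
       (\<Sum>aa\<in>{0..wt M}.
          (let bb = int aa - n - 1 - \<lfloor>lip a beta\<rfloor> in
           if bb \<ge> 0 then
             expco (\<lambda>k. cr (hofl a) k) (nat bb)
               (expco (\<lambda>k w. smul (-1) (an (hofl a) k w)) aa (bv (M, a + beta)))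
           else 0)))"

text \<open>Modes of Y(h(-1)^2 (x) e^0, z) = :h(z) h(z): , i.e.
  {h(-1)^2 (x) e^0}_m = sum_{j+k=m-1} :h(j) h(k): (annihilators to the right);
  on M (x) e^beta only j in [m-1-wt M, wt M] contribute.\<close>
definition sqmode :: "hvec \<Rightarrow> int \<Rightarrow> vec \<Rightarrow> vec" where
  "sqmode h m = lext (\<lambda>(M, beta).
     (\<Sum>j\<in>{m - 1 - int (wt M) .. int (wt M)}.
        (let k = m - 1 - j in
         if 0 < j \<and> k < 0 then hm h k (hm h j (bv (M, beta)))
         else hm h j (hm h k (bv (M, beta))))))"

definition h1 :: hvec where "h1 = hofl (lam L6 - lam L1)"
definition h2 :: hvec where "h2 = hofl (lam L3 - lam L5)"
definition h3 :: hvec where "h3 = hofl (lam L1 - lam L3 + lam L5 - lam L6)"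

definition gamma1 :: lat where "gamma1 = alpha L1 - alpha L6"
definition gamma2 :: lat where "gamma2 = alpha L3 - alpha L5"
definition gamma3 :: lat where "gamma3 = gamma1 + gamma2"

text \<open>{omega}_n, by linearity of Y in the vector omega.\<close>
definition omode :: "int \<Rightarrow> vec \<Rightarrow> vec" where
  "omode n v =
     smul (1/10) (sqmode h1 n v + sqmode h2 n v + sqmode h3 n v)
   + smul (1/5) (- (emode gamma1 n v + emode (- gamma1) n v)
                 - (emode gamma2 n v + emode (- gamma2) n v)
                 + (emode gamma3 n v + emode (- gamma3) n v))"

definition Lvir :: "int \<Rightarrow> vec \<Rightarrow> vec" where
  "Lvir n = omode (n + 1)"

definition theta :: lat where
  "theta = alpha L1 + 2 * alpha L2 + 2 * alpha L3 + 3 * alpha L4 + 2 * alpha L5 + alpha L6"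

definition beta1 :: "vec \<Rightarrow> vec" where "beta1 v = emode (alpha L2) 0 v"
definition beta2 :: "vec \<Rightarrow> vec" where "beta2 v = emode (alpha L4) 0 v"
definition beta3 :: "vec \<Rightarrow> vec" where "beta3 v = emode (alpha L3) 0 v + emode (alpha L5) 0 v"
definition beta4 :: "vec \<Rightarrow> vec" where "beta4 v = emode (alpha L1) 0 v + emode (alpha L6) 0 v"
definition lowtheta :: "vec \<Rightarrow> vec" where "lowtheta v = emode (- theta) 1 v"

fun tauix :: "ix \<Rightarrow> ix" where
  "tauix L1 = L6" | "tauix L6 = L1" | "tauix L3 = L5" | "tauix L5 = L3"
| "tauix L2 = L2" | "tauix L4 = L4"

definition tau :: "lat \<Rightarrow> lat" where "tau nu = (\<lambda>i. nu (tauix i))"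

definition Proj :: "lat \<Rightarrow> ix \<Rightarrow> rat" where
  "Proj nu = (\<lambda>i. (of_int (nu i) + of_int (tau nu i)) / 2)"

definition vac :: "lat \<Rightarrow> vec" where "vac nu = bv ({#}, nu)"

definition Uvec :: vec where
  "Uvec =
     smul (1/6) (cr h1 1 (cr h1 1 (cr h1 1 (vac 0)))
               + cr h2 1 (cr h2 1 (cr h2 1 (vac 0)))
               + cr h3 1 (cr h3 1 (cr h3 1 (vac 0))))
   + smul (1/2) (cr h2 1 (vac gamma1 + vac (- gamma1)))
   + smul (1/2) (cr h1 1 (vac gamma2 + vac (- gamma2)))
   + smul (1/2) (cr (hofl (lam L3 - lam L1 - lam L5 + lam L6)) 1 (vac gamma3 + vac (- gamma3)))"

end

theory Submission
  imports Defs "HOL-Library.Product_Lexorder"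
begin

text \<open>All assertions about U are identities between explicit, finitely supported vectors of
  V_P, so they can be decided by computation. A vector is represented by a list of terms
  (monomial, weight, rational coefficient), and every operator in the statement -- the
  Heisenberg modes, the coefficients of the exponentials, the modes of the vertex operators
  Y(e^\<alpha>, z) and Y(h(-1)^2, z), and hence the modes of \<omega> -- is refined to an
  executable operator on such lists; the finite identities are then evaluated by rewriting
  with code equations. The weights occurring in U are 0, \<plusminus>\<gamma>1, \<plusminus>\<gamma>2 and
  \<plusminus>\<gamma>3, which lie in Q and are negated by \<tau>, so they project to 0.\<close>

lemma inj_ixn: "inj ixn"
  by (rule injI) (case_tac x; case_tac y; simp)

text \<open>The order on nodes is only used to store monomials as sorted lists, so that equal
  monomials are equal lists and like terms can be merged.\<close>

instantiation ix :: linorder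
begin
definition less_eq_ix :: "ix \<Rightarrow> ix \<Rightarrow> bool" where "less_eq_ix x y \<longleftrightarrow> ixn x \<le> ixn y"
definition less_ix :: "ix \<Rightarrow> ix \<Rightarrow> bool" where "less_ix x y \<longleftrightarrow> ixn x < ixn y"
instance
  by standard (auto simp: less_eq_ix_def less_ix_def intro: injD[OF inj_ixn])
end

text \<open>A weight in fundamental-weight coordinates, as a datatype so that equality of weights
  is executable.\<close>

datatype lcoords = LC int int int int int int

fun lat_of :: "lcoords \<Rightarrow> lat" where
  "lat_of (LC a b c d e f) =
     (\<lambda>i. case i of L1 \<Rightarrow> a | L2 \<Rightarrow> b | L3 \<Rightarrow> c | L4 \<Rightarrow> d | L5 \<Rightarrow> e | L6 \<Rightarrow> f)"

fun lc_add :: "lcoords \<Rightarrow> lcoords \<Rightarrow> lcoords" where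
  "lc_add (LC a b c d e f) (LC a' b' c' d' e' f') = LC (a + a') (b + b') (c + c') (d + d') (e + e') (f + f')"

lemma lat_of_lc_add: "lat_of (lc_add x y) = lat_of x + lat_of y"
  by (cases x; cases y) (auto split: ix.split)

lemma inj_lat_of: "inj lat_of"
proof (rule injI)
  fix x y assume "lat_of x = lat_of y"
  then have "\<And>i. lat_of x i = lat_of y i" by simp
  from this[of L1] this[of L2] this[of L3] this[of L4] this[of L5] this[of L6] show "x = y"
    by (cases x; cases y) simp
qed

definition ix_list :: "ix list" where "ix_list = [L1, L2, L3, L4, L5, L6]"

lemma sum_UNIV_ix: "(\<Sum>i\<in>UNIV. f i) = (\<Sum>i\<leftarrow>ix_list. f i)"
  by (simp add: UNIV_ix ix_list_def)

lemma prod_UNIV_ix: "(\<Prod>i\<in>UNIV. f i) = (\<Prod>i\<leftarrow>ix_list. f i)"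
  by (simp add: UNIV_ix ix_list_def)

type_synonym frac = "int \<times> int"

definition frac_val :: "frac \<Rightarrow> complex" where
  "frac_val c = of_int (fst c) / of_int (snd c)"

definition frac_mult :: "frac \<Rightarrow> frac \<Rightarrow> frac" where
  "frac_mult x y = (fst x * fst y, snd x * snd y)"

definition frac_norm :: "frac \<Rightarrow> frac" where
  "frac_norm x = (let g = gcd (fst x) (snd x) in if g = 0 then x else (fst x div g, snd x div g))"

text \<open>Pairs with denominator 0 denote 0, and are treated as such by the addition.\<close>

definition frac_add :: "frac \<Rightarrow> frac \<Rightarrow> frac" where
  "frac_add x y = frac_norm (if snd x = 0 then y else if snd y = 0 then x
                             else (fst x * snd y + fst y * snd x, snd x * snd y))"

lemma frac_val_mult: "frac_val (frac_mult x y) = frac_val x * frac_val y"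
  by (simp add: frac_val_def frac_mult_def)

lemma frac_val_norm: "frac_val (frac_norm x) = frac_val x"
proof (cases x)
  case (Pair p q)
  define g where "g = gcd p q"
  show ?thesis
  proof (cases "g = 0")
    case True
    then show ?thesis by (simp add: frac_norm_def Pair g_def)
  next
    case False
    have "frac_val x = of_int (g * (p div g)) / of_int (g * (q div g))"
      by (simp add: frac_val_def Pair g_def)
    also have "\<dots> = of_int (p div g) / of_int (q div g)"
      using False by (simp add: mult_divide_mult_cancel_left)
    finally show ?thesis
      using False by (simp add: frac_norm_def Pair g_def[symmetric] frac_val_def)
  qed
qed

lemma frac_val_add: "frac_val (frac_add x y) = frac_val x + frac_val y"
  unfolding frac_add_def frac_val_norm by (auto simp: frac_val_def add_frac_eq)

section \<open>Vectors as lists of terms\<close>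

type_synonym key = "(ix \<times> nat) list \<times> lcoords"
type_synonym vlist = "(key \<times> frac) list"

fun basis_of_key :: "key \<Rightarrow> basis" where
  "basis_of_key (M, l) = (mset M, lat_of l)"

lemma basis_of_key_eq_iff:
  "basis_of_key k = basis_of_key k' \<longleftrightarrow> mset (fst k) = mset (fst k') \<and> snd k = snd k'"
  by (cases k; cases k') (auto dest: injD[OF inj_lat_of])

definition vec_of :: "vlist \<Rightarrow> vec" where
  "vec_of xs = sum_list (map (\<lambda>(k, c). smul (frac_val c) (bv (basis_of_key k))) xs)"

lemma vec_of_Nil [simp]: "vec_of [] = 0"
  by (simp add: vec_of_def)

lemma vec_of_Cons: "vec_of ((k, c) # xs) = smul (frac_val c) (bv (basis_of_key k)) + vec_of xs"
  by (simp add: vec_of_def)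

lemma vec_of_append: "vec_of (xs @ ys) = vec_of xs + vec_of ys"
  by (simp add: vec_of_def)

lemma vec_of_concat: "vec_of (concat xss) = (\<Sum>xs\<leftarrow>xss. vec_of xs)"
  by (induction xss) (simp_all add: vec_of_append)

lemma vec_of_single: "vec_of [((M, l), (1, 1))] = bv (mset M, lat_of l)"
  by (simp add: vec_of_Cons smul_def frac_val_def)

lemma vec_of_apply: "vec_of xs b = (\<Sum>(k, c)\<leftarrow>xs. if basis_of_key k = b then frac_val c else 0)"
  unfolding vec_of_def by (induction xs) (auto simp: smul_def bv_def)

lemma vec_of_apply_key:
  assumes "filter (\<lambda>(k, c). mset (fst k) = mset M \<and> snd k = l) xs = [(k1, c1)]"
  shows "vec_of xs (mset M, lat_of l) = frac_val c1"
proof -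
  have "vec_of xs (basis_of_key (M, l))
      = (\<Sum>(k, c)\<leftarrow>filter (\<lambda>(k, c). mset (fst k) = mset M \<and> snd k = l) xs. frac_val c)"
    unfolding vec_of_apply basis_of_key_eq_iff by (induction xs) (simp_all add: split_beta)
  then show ?thesis using assms by simp
qed

lemma vec_of_support: "vec_of xs b \<noteq> 0 \<Longrightarrow> b \<in> basis_of_key ` fst ` set xs"
  by (induction xs) (auto simp: vec_of_apply split: if_splits)

lemma finite_support_vec_of: "finite {b. vec_of xs b \<noteq> 0}"
  by (rule finite_subset[of _ "basis_of_key ` fst ` set xs"]) (auto dest: vec_of_support)

lemma smul_add: "smul c (v + w) = smul c v + smul c w"
  by (simp add: smul_def fun_eq_iff algebra_simps)

lemma smul_smul: "smul c (smul d v) = smul (c * d) v"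
  by (simp add: smul_def mult.assoc)

lemma smul_zero [simp]: "smul c 0 = 0" "smul c (\<lambda>_. 0) = (\<lambda>_. 0)"
  by (simp_all add: smul_def fun_eq_iff)

definition scale_vlist :: "frac \<Rightarrow> vlist \<Rightarrow> vlist" where
  "scale_vlist r xs = map (\<lambda>(k, c). (k, frac_norm (frac_mult r c))) xs"

lemma vec_of_scale: "vec_of (scale_vlist r xs) = smul (frac_val r) (vec_of xs)"
  by (induction xs)
    (auto simp: scale_vlist_def vec_of_Cons smul_add smul_smul frac_val_norm frac_val_mult)

fun insert_term :: "key \<times> frac \<Rightarrow> vlist \<Rightarrow> vlist" where
  "insert_term x [] = [x]"
| "insert_term (k, c) ((k', c') # ys) =
     (if k = k' then (k, frac_add c c') # ys else (k', c') # insert_term (k, c) ys)"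

lemma vec_of_insert_term: "vec_of (insert_term x ys) = vec_of (x # ys)"
  by (induction x ys rule: insert_term.induct)
    (auto simp: vec_of_Cons smul_def fun_eq_iff frac_val_add algebra_simps)

definition drop_zero_terms :: "vlist \<Rightarrow> vlist" where
  "drop_zero_terms = filter (\<lambda>(k, c). fst c \<noteq> 0)"

definition normalize_vlist :: "vlist \<Rightarrow> vlist" where
  "normalize_vlist xs = drop_zero_terms (foldr insert_term (drop_zero_terms xs) [])"

lemma vec_of_drop_zero_terms: "vec_of (drop_zero_terms xs) = vec_of xs"
  by (induction xs) (auto simp: drop_zero_terms_def vec_of_Cons smul_def fun_eq_iff frac_val_def)

lemma vec_of_normalize: "vec_of (normalize_vlist xs) = vec_of xs"
proof -
  have "vec_of (foldr insert_term ys []) = vec_of ys" for ys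
    by (induction ys) (auto simp: vec_of_insert_term vec_of_Cons)
  then show ?thesis by (simp add: normalize_vlist_def vec_of_drop_zero_terms)
qed

lemma vec_of_eq_0: "normalize_vlist xs = [] \<Longrightarrow> vec_of xs = 0"
  using vec_of_normalize[of xs] by simp

lemma vec_of_eq: "normalize_vlist (xs @ scale_vlist (-1, 1) ys) = [] \<Longrightarrow> vec_of xs = vec_of ys"
  using vec_of_eq_0[of "xs @ scale_vlist (-1, 1) ys"]
  by (simp add: vec_of_append vec_of_scale frac_val_def fun_eq_iff smul_def)

lemma lext_eq_sum_superset:
  assumes "finite T" "{b. v b \<noteq> 0} \<subseteq> T"
  shows "lext f v b' = (\<Sum>b\<in>T. v b * f b b')"
  unfolding lext_def by (rule sum.mono_neutral_left) (use assms in \<open>auto intro: finite_subset\<close>)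

lemma lext_add:
  assumes "finite {b. v b \<noteq> 0}" "finite {b. w b \<noteq> 0}"
  shows "lext f (v + w) = lext f v + lext f w"
proof
  fix b'
  define T where "T = {b. v b \<noteq> 0} \<union> {b. w b \<noteq> 0}"
  have "finite T" using assms by (simp add: T_def)
  then have "lext f u b' = (\<Sum>b\<in>T. u b * f b b')" if "u \<in> {v, w, v + w}" for u
    by (rule lext_eq_sum_superset) (use that in \<open>auto simp: T_def\<close>)
  then show "lext f (v + w) b' = (lext f v + lext f w) b'"
    by (simp add: algebra_simps sum.distrib)
qed

lemma lext_smul_bv: "lext f (smul c (bv b)) = smul c (f b)"
proof
  fix b'
  have "lext f (smul c (bv b)) b' = (\<Sum>x\<in>{b}. smul c (bv b) x * f x b')"
    by (rule lext_eq_sum_superset) (auto simp: smul_def bv_def)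
  then show "lext f (smul c (bv b)) b' = smul c (f b) b'"
    by (simp add: smul_def bv_def)
qed

lemma lext_vec_of: "lext f (vec_of xs) = (\<Sum>(k, c)\<leftarrow>xs. smul (frac_val c) (f (basis_of_key k)))"
proof (induction xs)
  case Nil
  then show ?case by (simp add: lext_def zero_fun_def)
next
  case (Cons x xs)
  obtain k c where x: "x = (k, c)" by (cases x) blast
  have fin: "finite {b. smul (frac_val c) (bv (basis_of_key k)) b \<noteq> 0}"
    by (rule finite_subset[of _ "{basis_of_key k}"]) (auto simp: smul_def bv_def)
  show ?case
    unfolding x vec_of_Cons lext_add[OF fin finite_support_vec_of] lext_smul_bv Cons by simp
qed

definition bind_vlist :: "(key \<Rightarrow> vlist) \<Rightarrow> vlist \<Rightarrow> vlist" where
  "bind_vlist g xs = normalize_vlist (concat (map (\<lambda>(k, c). scale_vlist c (g k)) xs))"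

lemma lext_vec_of_bind:
  assumes "\<And>M l. f (mset M, lat_of l) = vec_of (g (M, l))"
  shows "lext f (vec_of xs) = vec_of (bind_vlist g xs)"
proof -
  have "lext f (vec_of xs) = (\<Sum>(k, c)\<leftarrow>xs. smul (frac_val c) (f (basis_of_key k)))"
    by (rule lext_vec_of)
  also have "\<dots> = (\<Sum>(k, c)\<leftarrow>xs. vec_of (scale_vlist c (g k)))"
    by (rule arg_cong[where f = sum_list], rule map_cong) (auto simp: vec_of_scale assms)
  also have "\<dots> = vec_of (concat (map (\<lambda>(k, c). scale_vlist c (g k)) xs))"
    by (simp add: vec_of_concat o_def case_prod_unfold)
  finally show ?thesis by (simp add: bind_vlist_def vec_of_normalize)
qed

text \<open>Three times the Gram matrix, which is integral.\<close>

definition gram3 :: "ix \<Rightarrow> ix \<Rightarrow> int" where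
  "gram3 i j = [[4,3,5,6,4,2],[3,6,6,9,6,3],[5,6,10,12,8,4],
                [6,9,12,18,12,6],[4,6,8,12,10,5],[2,3,4,6,5,4]] ! ixn i ! ixn j"

lemma ginv_gram3: "ginv i j = of_int (gram3 i j) / 3"
  by (simp add: ginv_def gram3_def)
definition lip3 :: "lat \<Rightarrow> lat \<Rightarrow> int" where
  "lip3 x y = (\<Sum>i\<leftarrow>ix_list. \<Sum>j\<leftarrow>ix_list. x i * y j * gram3 i j)"
lemma lip3_eq_sum: "lip3 x y = (\<Sum>i\<in>UNIV. \<Sum>j\<in>UNIV. x i * y j * gram3 i j)"
  by (simp add: lip3_def sum_UNIV_ix)
lemma lip_eq_lip3: "lip x y = of_int (lip3 x y) / 3"
  by (simp add: lip_def lip3_eq_sum ginv_gram3 of_int_sum sum_divide_distrib)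
lemma ip_hofl: "ip (hofl x) (hofl y) = of_int (lip3 x y) / 3"
  by (simp add: ip_def hofl_def lip3_eq_sum ginv_gram3 of_int_sum sum_divide_distrib of_rat_divide)
lemma lip3_lam: "lip3 x (lam i) = (\<Sum>j\<leftarrow>ix_list. x j * gram3 j i)"
  by (cases i) (simp_all add: lip3_def ix_list_def lam_def)

fun cr_term :: "lcoords \<Rightarrow> nat \<Rightarrow> key \<Rightarrow> vlist" where
  "cr_term a n (M, l) = map (\<lambda>i. ((insort (i, n - 1) M, l), (lat_of a i, 1))) ix_list"

definition cr_vlist :: "lcoords \<Rightarrow> nat \<Rightarrow> vlist \<Rightarrow> vlist" where
  "cr_vlist a n = bind_vlist (cr_term a n)"

lemma cr_vec_of: "cr (hofl (lat_of a)) n (vec_of xs) = vec_of (cr_vlist a n xs)"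
  unfolding cr_def cr_vlist_def
proof (rule lext_vec_of_bind)
  fix M l
  have "vec_of (map (\<lambda>i. ((insort (i, n - 1) M, l), (lat_of a i, 1))) is)
      = (\<Sum>i\<leftarrow>is. smul (of_int (lat_of a i)) (bv (add_mset (i, n - 1) (mset M), lat_of l)))" for "is"
    by (induction "is") (simp_all add: vec_of_Cons frac_val_def)
  then show "(case (mset M, lat_of l) of (M, \<beta>) \<Rightarrow>
      \<Sum>i\<in>UNIV. smul (hofl (lat_of a) i) (bv (M + {#(i, n - 1)#}, \<beta>)))
    = vec_of (cr_term a n (M, l))"
    by (simp add: sum_UNIV_ix hofl_def)
qed

fun an_term :: "lcoords \<Rightarrow> nat \<Rightarrow> key \<Rightarrow> vlist" where
  "an_term a n (M, l) = map (\<lambda>i. ((remove1 (i, n - 1) M, l),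
     (int n * (\<Sum>j\<leftarrow>ix_list. lat_of a j * gram3 j i) * int (count_list M (i, n - 1)), 3))) ix_list"

definition an_vlist :: "lcoords \<Rightarrow> nat \<Rightarrow> vlist \<Rightarrow> vlist" where
  "an_vlist a n = bind_vlist (an_term a n)"

lemma an_vec_of: "an (hofl (lat_of a)) n (vec_of xs) = vec_of (an_vlist a n xs)"
  unfolding an_def an_vlist_def
proof (rule lext_vec_of_bind)
  fix M l
  let ?c = "\<lambda>i. of_nat n * ip (hofl (lat_of a)) (hofl (lam i)) * of_nat (count_list M (i, n - 1))"
  have "vec_of (map (\<lambda>i. ((remove1 (i, n - 1) M, l),
      (int n * (\<Sum>j\<leftarrow>ix_list. lat_of a j * gram3 j i) * int (count_list M (i, n - 1)), 3))) is)
      = (\<Sum>i\<leftarrow>is. smul (?c i) (bv (mset M - {#(i, n - 1)#}, lat_of l)))" for "is"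
    by (induction "is") (simp_all add: vec_of_Cons frac_val_def ip_hofl lip3_lam)
  then show "(case (mset M, lat_of l) of (M, \<beta>) \<Rightarrow> \<Sum>i\<in>UNIV.
      smul (of_nat n * ip (hofl (lat_of a)) (hofl (lam i)) * of_nat (count M (i, n - 1)))
        (bv (M - {#(i, n - 1)#}, \<beta>))) = vec_of (an_term a n (M, l))"
    by (simp add: sum_UNIV_ix count_mset)
qed

fun zm_term :: "lcoords \<Rightarrow> key \<Rightarrow> vlist" where
  "zm_term a (M, l) = [((M, l), (lip3 (lat_of a) (lat_of l), 3))]"

definition zm_vlist :: "lcoords \<Rightarrow> vlist \<Rightarrow> vlist" where
  "zm_vlist a = bind_vlist (zm_term a)"

lemma zm_vec_of: "zm (hofl (lat_of a)) (vec_of xs) = vec_of (zm_vlist a xs)"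
  unfolding zm_def zm_vlist_def
  by (rule lext_vec_of_bind) (simp add: vec_of_Cons ip_hofl frac_val_def)

definition hm_vlist :: "lcoords \<Rightarrow> int \<Rightarrow> vlist \<Rightarrow> vlist" where
  "hm_vlist a m = (if m < 0 then cr_vlist a (nat (- m)) else if m = 0 then zm_vlist a else an_vlist a (nat m))"

lemma hm_vec_of: "hm (hofl (lat_of a)) m (vec_of xs) = vec_of (hm_vlist a m xs)"
  by (simp add: hm_def hm_vlist_def cr_vec_of an_vec_of zm_vec_of)

definition wt_list :: "(ix \<times> nat) list \<Rightarrow> nat" where
  "wt_list M = (\<Sum>x\<leftarrow>M. snd x + 1)"

lemma wt_mset: "wt (mset M) = wt_list M"
  by (induction M) (simp_all add: wt_def wt_list_def)

fun sqmode_term :: "lcoords \<Rightarrow> int \<Rightarrow> key \<Rightarrow> vlist" where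
  "sqmode_term a m (M, l) = concat (map (\<lambda>j. let k = m - 1 - j in
      if 0 < j \<and> k < 0 then hm_vlist a k (hm_vlist a j [((M, l), (1, 1))])
      else hm_vlist a j (hm_vlist a k [((M, l), (1, 1))]))
    [m - 1 - int (wt_list M) .. int (wt_list M)])"

definition sqmode_vlist :: "lcoords \<Rightarrow> int \<Rightarrow> vlist \<Rightarrow> vlist" where
  "sqmode_vlist a m = bind_vlist (sqmode_term a m)"

lemma sum_atLeastAtMost_int_conv_sum_list: "sum f {a..b::int} = (\<Sum>j\<leftarrow>[a..b]. f j)"
  by (simp add: interv_sum_list_conv_sum_set_int)

lemma sqmode_vec_of: "sqmode (hofl (lat_of a)) m (vec_of xs) = vec_of (sqmode_vlist a m xs)"
  unfolding sqmode_def sqmode_vlist_def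
  by (rule lext_vec_of_bind)
    (simp add: wt_mset sum_atLeastAtMost_int_conv_sum_list vec_of_concat vec_of_single[symmetric]
      hm_vec_of Let_def if_distrib o_def cong: if_cong)

fun comp_list :: "nat \<Rightarrow> nat list list" where
  "comp_list 0 = [[]]"
| "comp_list (Suc n) = concat (map (\<lambda>k. map ((#) (Suc k)) (comp_list (n - k))) [0..<Suc n])"

lemma comps_0: "comps 0 = {[]}"
proof -
  have "ks = []" if "sum_list ks = 0" "0 \<notin> set ks" for ks :: "nat list"
    using that by (cases ks) auto
  then show ?thesis by (auto simp: comps_def)
qed

lemma comps_Suc: "comps (Suc n) = (\<Union>k\<in>{0..<Suc n}. (#) (Suc k) ` comps (n - k))"
proof (rule set_eqI)
  fix ks
  show "ks \<in> comps (Suc n) \<longleftrightarrow> ks \<in> (\<Union>k\<in>{0..<Suc n}. (#) (Suc k) ` comps (n - k))"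
  proof
    assume ks: "ks \<in> comps (Suc n)"
    then obtain k ks' where "ks = Suc k # ks'"
      by (cases ks; case_tac "hd ks") (auto simp: comps_def)
    with ks show "ks \<in> (\<Union>k\<in>{0..<Suc n}. (#) (Suc k) ` comps (n - k))"
      by (auto simp: comps_def image_iff intro!: bexI[of _ k])
  qed (auto simp: comps_def)
qed

lemma set_comp_list: "set (comp_list n) = comps n"
proof (induction n rule: comp_list.induct)
  case 1
  then show ?case by (simp add: comps_0)
next
  case (2 n)
  then show ?case
    unfolding comp_list.simps comps_Suc set_concat set_map image_image set_upt
    by (intro SUP_cong) auto
qed

lemma comp_list_nonempty: "comp_list n \<noteq> []"
  by (cases n) simp_all

lemma distinct_comp_list: "distinct (comp_list n)"
proof (induction n rule: comp_list.induct)
  case 1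
  then show ?case by simp
next
  case (2 n)
  let ?f = "\<lambda>k. map ((#) (Suc k)) (comp_list (n - k))"
  have "inj ?f"
  proof (rule injI)
    fix k k' assume eq: "?f k = ?f k'"
    obtain y ys where "comp_list (n - k) = y # ys"
      using comp_list_nonempty by (cases "comp_list (n - k)") auto
    with eq show "k = k'" by (cases "comp_list (n - k')") auto
  qed
  then show ?case
    unfolding comp_list.simps
    by (intro distinct_concat) (use 2 in \<open>auto simp: distinct_map inj_on_def del: upt_Suc\<close>)
qed
fun modes_vlist :: "(nat \<Rightarrow> vlist \<Rightarrow> vlist) \<Rightarrow> nat list \<Rightarrow> vlist \<Rightarrow> vlist" where
  "modes_vlist x [] v = v"
| "modes_vlist x (k # ks) v = scale_vlist (1, int k) (x k (modes_vlist x ks v))"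

definition expco_vlist :: "(nat \<Rightarrow> vlist \<Rightarrow> vlist) \<Rightarrow> nat \<Rightarrow> vlist \<Rightarrow> vlist" where
  "expco_vlist x b v =
     concat (map (\<lambda>ks. scale_vlist (1, int (fact (length ks))) (modes_vlist x ks v)) (comp_list b))"

lemma expco_vec_of:
  assumes "\<And>k ys. x k (vec_of ys) = vec_of (x' k ys)"
  shows "expco x b (vec_of xs) = vec_of (expco_vlist x' b xs)"
proof -
  have foldr_modes: "foldr (\<lambda>k f. (\<lambda>w. smul (1 / of_nat k) (x k w)) \<circ> f) ks id (vec_of xs)
      = vec_of (modes_vlist x' ks xs)" for ks
    by (induction ks) (simp_all add: vec_of_scale assms frac_val_def)
  show ?thesis
    unfolding expco_def expco_vlist_def
    by (simp add: set_comp_list[symmetric] sum_list_distinct_conv_sum_set[symmetric]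
        distinct_comp_list vec_of_concat vec_of_scale foldr_modes frac_val_def o_def)
qed

section \<open>Vertex operator modes\<close>

text \<open>The cocycle is \<epsilon>(\<mu>, \<nu>) = (-1)^e(\<mu>, \<nu>), where e collects the
  entries -1 of the matrix of \<epsilon>.\<close>

fun eps_exponent :: "lcoords \<Rightarrow> lcoords \<Rightarrow> int" where
  "eps_exponent (LC a1 a2 a3 a4 a5 a6) (LC b1 b2 b3 b4 b5 b6) =
     a2 * b1 + a2 * b6 + a3 * b1 + a4 * b2 + a5 * b6"

lemma eps_lat_of: "eps (lat_of x) (lat_of y) = (-1) powi eps_exponent x y"
  by (cases x; cases y) (simp add: eps_def prod_UNIV_ix ix_list_def epsmat_def power_int_add)

lemma minus_one_powi: "(-1 :: 'a :: division_ring) powi k = of_int (if even k then 1 else -1)"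
  by (simp add: power_int_minus_left)

lemma floor_of_int_div_3: "\<lfloor>(of_int z :: rat) / 3\<rfloor> = z div 3"
  using floor_divide_of_int_eq[of z 3, where 'a = rat] by simp

lemma sum_atLeastAtMost_nat_conv_sum_list: "sum f {0..m::nat} = (\<Sum>k\<leftarrow>[0..<Suc m]. f k)"
  by (simp add: interv_sum_list_conv_sum_set_nat atLeastLessThanSuc_atLeastAtMost del: upt_Suc)

definition emode_summand :: "lcoords \<Rightarrow> int \<Rightarrow> (ix \<times> nat) list \<Rightarrow> lcoords \<Rightarrow> nat \<Rightarrow> vlist" where
  "emode_summand a n M l p = (let q = int p - n - 1 - lip3 (lat_of a) (lat_of l) div 3 in
     if q \<ge> 0 then
       expco_vlist (cr_vlist a) (nat q)
         (expco_vlist (\<lambda>k w. scale_vlist (-1, 1) (an_vlist a k w)) p [((M, lc_add a l), (1, 1))])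
     else [])"

fun emode_term :: "lcoords \<Rightarrow> int \<Rightarrow> key \<Rightarrow> vlist" where
  "emode_term a n (M, l) = scale_vlist (if even (eps_exponent a l) then 1 else -1, 1)
     (concat (map (emode_summand a n M l) [0..<Suc (wt_list M)]))"

definition emode_vlist :: "lcoords \<Rightarrow> int \<Rightarrow> vlist \<Rightarrow> vlist" where
  "emode_vlist a n = bind_vlist (emode_term a n)"

lemma emode_vec_of: "emode (lat_of a) n (vec_of xs) = vec_of (emode_vlist a n xs)"
proof -
  have cr: "cr (hofl (lat_of a)) k (vec_of ys) = vec_of (cr_vlist a k ys)" for k ys
    by (rule cr_vec_of)
  have an: "smul (-1) (an (hofl (lat_of a)) k (vec_of ys))
      = vec_of (scale_vlist (-1, 1) (an_vlist a k ys))" for k ys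
    by (simp add: vec_of_scale an_vec_of frac_val_def)
  have bv: "bv (mset M, lat_of a + lat_of l) = vec_of [((M, lc_add a l), (1, 1))]" for M l
    by (simp add: vec_of_single lat_of_lc_add)
  show ?thesis
    unfolding emode_def emode_vlist_def
    by (rule lext_vec_of_bind)
      (simp del: upt_Suc add: emode_summand_def wt_mset vec_of_scale eps_lat_of minus_one_powi
        frac_val_def lip_eq_lip3 floor_of_int_div_3 sum_atLeastAtMost_nat_conv_sum_list
        vec_of_concat bv Let_def if_distrib[where f = vec_of] o_def
        expco_vec_of[where x = "\<lambda>k w. smul (-1) (an (hofl (lat_of a)) k w)", OF an]
        expco_vec_of[where x = "cr (hofl (lat_of a))", OF cr] cong: if_cong)
qed

definition alpha1_lc :: lcoords where "alpha1_lc = LC 2 0 (-1) 0 0 0"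
definition alpha2_lc :: lcoords where "alpha2_lc = LC 0 2 0 (-1) 0 0"
definition alpha3_lc :: lcoords where "alpha3_lc = LC (-1) 0 2 (-1) 0 0"
definition alpha4_lc :: lcoords where "alpha4_lc = LC 0 (-1) (-1) 2 (-1) 0"
definition alpha5_lc :: lcoords where "alpha5_lc = LC 0 0 0 (-1) 2 (-1)"
definition alpha6_lc :: lcoords where "alpha6_lc = LC 0 0 0 0 (-1) 2"
definition neg_theta_lc :: lcoords where "neg_theta_lc = LC 0 (-1) 0 0 0 0"
definition gamma1_lc :: lcoords where "gamma1_lc = LC 2 0 (-1) 0 1 (-2)"
definition gamma2_lc :: lcoords where "gamma2_lc = LC (-1) 0 2 0 (-2) 1"
definition gamma3_lc :: lcoords where "gamma3_lc = LC 1 0 1 0 (-1) (-1)"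
definition neg_gamma1_lc :: lcoords where "neg_gamma1_lc = LC (-2) 0 1 0 (-1) 2"
definition neg_gamma2_lc :: lcoords where "neg_gamma2_lc = LC 1 0 (-2) 0 2 (-1)"
definition neg_gamma3_lc :: lcoords where "neg_gamma3_lc = LC (-1) 0 (-1) 0 1 1"
definition zero_lc :: lcoords where "zero_lc = LC 0 0 0 0 0 0"
definition h1_lc :: lcoords where "h1_lc = LC (-1) 0 0 0 0 1"
definition h2_lc :: lcoords where "h2_lc = LC 0 0 1 0 (-1) 0"
definition h3_lc :: lcoords where "h3_lc = LC 1 0 (-1) 0 1 (-1)"
definition h4_lc :: lcoords where "h4_lc = LC (-1) 0 1 0 (-1) 1"

lemma alpha_lc:
  "alpha L1 = lat_of alpha1_lc" "alpha L2 = lat_of alpha2_lc" "alpha L3 = lat_of alpha3_lc"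
  "alpha L4 = lat_of alpha4_lc" "alpha L5 = lat_of alpha5_lc" "alpha L6 = lat_of alpha6_lc"
  by (auto simp: alpha_def cartan_def adj_def doubleton_eq_iff alpha1_lc_def alpha2_lc_def
      alpha3_lc_def alpha4_lc_def alpha5_lc_def alpha6_lc_def split: ix.split)

lemma neg_theta_lc: "- theta = lat_of neg_theta_lc"
  by (auto simp: theta_def alpha_lc alpha1_lc_def alpha2_lc_def alpha3_lc_def alpha4_lc_def
      alpha5_lc_def alpha6_lc_def neg_theta_lc_def split: ix.split)

lemma gamma_lc:
  "gamma1 = lat_of gamma1_lc" "gamma2 = lat_of gamma2_lc" "gamma3 = lat_of gamma3_lc"
  "- gamma1 = lat_of neg_gamma1_lc" "- gamma2 = lat_of neg_gamma2_lc" "- gamma3 = lat_of neg_gamma3_lc"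
  by (auto simp: gamma1_def gamma2_def gamma3_def alpha_lc alpha1_lc_def alpha3_lc_def alpha5_lc_def
      alpha6_lc_def gamma1_lc_def gamma2_lc_def gamma3_lc_def neg_gamma1_lc_def neg_gamma2_lc_def
      neg_gamma3_lc_def split: ix.split)

lemma zero_lc: "0 = lat_of zero_lc"
  by (auto simp: zero_lc_def split: ix.split)

lemma h_lc:
  "h1 = hofl (lat_of h1_lc)" "h2 = hofl (lat_of h2_lc)" "h3 = hofl (lat_of h3_lc)"
  "hofl (lam L3 - lam L1 - lam L5 + lam L6) = hofl (lat_of h4_lc)"
  by (auto simp: h1_def h2_def h3_def h1_lc_def h2_lc_def h3_lc_def h4_lc_def lam_def
      intro!: arg_cong[where f = hofl] split: ix.split)

definition omode_vlist :: "int \<Rightarrow> vlist \<Rightarrow> vlist" where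
  "omode_vlist n xs = normalize_vlist
     (scale_vlist (1, 10) (sqmode_vlist h1_lc n xs @ sqmode_vlist h2_lc n xs @ sqmode_vlist h3_lc n xs)
      @ scale_vlist (1, 5)
          (scale_vlist (-1, 1) (emode_vlist gamma1_lc n xs @ emode_vlist neg_gamma1_lc n xs)
           @ scale_vlist (-1, 1) (emode_vlist gamma2_lc n xs @ emode_vlist neg_gamma2_lc n xs)
           @ emode_vlist gamma3_lc n xs @ emode_vlist neg_gamma3_lc n xs))"

lemma omode_vec_of: "omode n (vec_of xs) = vec_of (omode_vlist n xs)"
  unfolding omode_def omode_vlist_def gamma_lc(4-6) unfolding gamma_lc(1-3) h_lc sqmode_vec_of emode_vec_of
    vec_of_normalize vec_of_append vec_of_scale
  by (simp add: smul_def frac_val_def fun_eq_iff algebra_simps)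

definition U_vlist :: vlist where
  "U_vlist = normalize_vlist
     (scale_vlist (1, 6) (cr_vlist h1_lc 1 (cr_vlist h1_lc 1 (cr_vlist h1_lc 1 [(([], zero_lc), (1, 1))]))
                       @ cr_vlist h2_lc 1 (cr_vlist h2_lc 1 (cr_vlist h2_lc 1 [(([], zero_lc), (1, 1))]))
                       @ cr_vlist h3_lc 1 (cr_vlist h3_lc 1 (cr_vlist h3_lc 1 [(([], zero_lc), (1, 1))])))
      @ scale_vlist (1, 2) (cr_vlist h2_lc 1 [(([], gamma1_lc), (1, 1)), (([], neg_gamma1_lc), (1, 1))])
      @ scale_vlist (1, 2) (cr_vlist h1_lc 1 [(([], gamma2_lc), (1, 1)), (([], neg_gamma2_lc), (1, 1))])
      @ scale_vlist (1, 2) (cr_vlist h4_lc 1 [(([], gamma3_lc), (1, 1)), (([], neg_gamma3_lc), (1, 1))]))"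

lemma Uvec_eq_U_vlist: "Uvec = vec_of U_vlist"
proof -
  have vac_zero: "vac 0 = vec_of [(([], zero_lc), (1, 1))]"
    by (simp add: vac_def zero_lc vec_of_single)
  have vac_pair: "vac \<gamma> + vac (- \<gamma>) = vec_of [(([], l), (1, 1)), (([], l'), (1, 1))]"
    if "\<gamma> = lat_of l" "- \<gamma> = lat_of l'" for \<gamma> l l'
    using that by (simp add: vac_def vec_of_Cons smul_def frac_val_def)
  show ?thesis
    unfolding Uvec_def U_vlist_def vac_zero vac_pair[OF gamma_lc(1,4)] vac_pair[OF gamma_lc(2,5)]
      vac_pair[OF gamma_lc(3,6)] h_lc cr_vec_of vec_of_normalize vec_of_append vec_of_scale
    by (simp add: frac_val_def add.assoc)
qed

definition U_terms :: vlist where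
  "U_terms = [(([(L1,0)], LC (-1) 0 (-1) 0 1 1), (-1,2)),
   (([(L1,0)], LC (-1) 0 2 0 (-2) 1), (-1,2)),
   (([(L1,0)], LC 1 0 (-2) 0 2 (-1)), (-1,2)),
   (([(L1,0)], LC 1 0 1 0 (-1) (-1)), (-1,2)),
   (([(L1,0),(L1,0),(L3,0)], LC 0 0 0 0 0 0), (-1,2)),
   (([(L1,0),(L1,0),(L5,0)], LC 0 0 0 0 0 0), (1,2)),
   (([(L1,0),(L3,0),(L3,0)], LC 0 0 0 0 0 0), (1,2)),
   (([(L1,0),(L3,0),(L5,0)], LC 0 0 0 0 0 0), (-1,1)),
   (([(L1,0),(L3,0),(L6,0)], LC 0 0 0 0 0 0), (1,1)),
   (([(L1,0),(L5,0),(L5,0)], LC 0 0 0 0 0 0), (1,2)),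
   (([(L1,0),(L5,0),(L6,0)], LC 0 0 0 0 0 0), (-1,1)),
   (([(L3,0)], LC (-2) 0 1 0 (-1) 2), (1,2)),
   (([(L3,0)], LC (-1) 0 (-1) 0 1 1), (1,2)),
   (([(L3,0)], LC 1 0 1 0 (-1) (-1)), (1,2)),
   (([(L3,0)], LC 2 0 (-1) 0 1 (-2)), (1,2)),
   (([(L3,0),(L3,0),(L6,0)], LC 0 0 0 0 0 0), (-1,2)),
   (([(L3,0),(L5,0),(L6,0)], LC 0 0 0 0 0 0), (1,1)),
   (([(L3,0),(L6,0),(L6,0)], LC 0 0 0 0 0 0), (-1,2)),
   (([(L5,0)], LC (-2) 0 1 0 (-1) 2), (-1,2)),
   (([(L5,0)], LC (-1) 0 (-1) 0 1 1), (-1,2)),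
   (([(L5,0)], LC 1 0 1 0 (-1) (-1)), (-1,2)),
   (([(L5,0)], LC 2 0 (-1) 0 1 (-2)), (-1,2)),
   (([(L5,0),(L5,0),(L6,0)], LC 0 0 0 0 0 0), (-1,2)),
   (([(L5,0),(L6,0),(L6,0)], LC 0 0 0 0 0 0), (1,2)),
   (([(L6,0)], LC (-1) 0 (-1) 0 1 1), (1,2)),
   (([(L6,0)], LC (-1) 0 2 0 (-2) 1), (1,2)),
   (([(L6,0)], LC 1 0 (-2) 0 2 (-1)), (1,2)),
   (([(L6,0)], LC 1 0 1 0 (-1) (-1)), (1,2))]"

lemma Uvec_eq_U_terms: "Uvec = vec_of U_terms"
proof -
  have "normalize_vlist (U_vlist @ scale_vlist (-1, 1) U_terms) = []" by code_simp
  then show ?thesis unfolding Uvec_eq_U_vlist by (rule vec_of_eq)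
qed

section \<open>The highest weight conditions\<close>

lemma Uvec_coeff: "Uvec ({#(L1, 0)#}, - gamma3) = - 1 / 2"
proof -
  have "filter (\<lambda>(k, c). mset (fst k) = mset [(L1, 0)] \<and> snd k = neg_gamma3_lc) U_terms
      = [(([(L1, 0)], neg_gamma3_lc), (-1, 2))]"
    by code_simp
  from vec_of_apply_key[OF this] show ?thesis
    by (simp add: Uvec_eq_U_terms gamma_lc(6) frac_val_def)
qed

lemma Uvec_support:
  assumes "Uvec b \<noteq> 0"
  shows "snd b \<in> {0, gamma1, - gamma1, gamma2, - gamma2, gamma3, - gamma3}"
proof -
  have "list_all (\<lambda>x. snd (fst x) \<in> set [zero_lc, gamma1_lc, neg_gamma1_lc, gamma2_lc,
      neg_gamma2_lc, gamma3_lc, neg_gamma3_lc]) U_terms"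
    by code_simp
  moreover obtain k where "k \<in> fst ` set U_terms" "b = basis_of_key k"
    using vec_of_support assms unfolding Uvec_eq_U_terms by blast
  moreover have "{0, gamma1, - gamma1, gamma2, - gamma2, gamma3, - gamma3} = lat_of ` set [zero_lc,
      gamma1_lc, neg_gamma1_lc, gamma2_lc, neg_gamma2_lc, gamma3_lc, neg_gamma3_lc]"
    unfolding gamma_lc(4-6) unfolding gamma_lc(1-3) zero_lc by simp
  ultimately show ?thesis
    by (cases k) (auto simp: list_all_iff)
qed

lemma beta_Uvec: "beta1 Uvec = 0" "beta2 Uvec = 0" "beta3 Uvec = 0" "beta4 Uvec = 0"
proof -
  have "normalize_vlist (emode_vlist alpha2_lc 0 U_terms) = []" by code_simp
  then show "beta1 Uvec = 0"
    unfolding beta1_def Uvec_eq_U_terms alpha_lc emode_vec_of by (rule vec_of_eq_0)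
  have "normalize_vlist (emode_vlist alpha4_lc 0 U_terms) = []" by code_simp
  then show "beta2 Uvec = 0"
    unfolding beta2_def Uvec_eq_U_terms alpha_lc emode_vec_of by (rule vec_of_eq_0)
  have "normalize_vlist (emode_vlist alpha3_lc 0 U_terms @ emode_vlist alpha5_lc 0 U_terms) = []"
    by code_simp
  then show "beta3 Uvec = 0"
    unfolding beta3_def Uvec_eq_U_terms alpha_lc emode_vec_of vec_of_append[symmetric]
    by (rule vec_of_eq_0)
  have "normalize_vlist (emode_vlist alpha1_lc 0 U_terms @ emode_vlist alpha6_lc 0 U_terms) = []"
    by code_simp
  then show "beta4 Uvec = 0"
    unfolding beta4_def Uvec_eq_U_terms alpha_lc emode_vec_of vec_of_append[symmetric]
    by (rule vec_of_eq_0)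
qed

lemma lowtheta_Uvec: "lowtheta Uvec = 0"
proof -
  have "normalize_vlist (emode_vlist neg_theta_lc 1 U_terms) = []" by code_simp
  then show ?thesis
    unfolding lowtheta_def Uvec_eq_U_terms neg_theta_lc emode_vec_of by (rule vec_of_eq_0)
qed

lemma Lvir_Uvec: "Lvir 1 Uvec = 0" "Lvir 2 Uvec = 0" "Lvir 0 Uvec = smul 3 Uvec"
proof -
  have "normalize_vlist (omode_vlist 2 U_terms) = []" by code_simp
  then show "Lvir 1 Uvec = 0"
    by (simp add: Lvir_def Uvec_eq_U_terms omode_vec_of vec_of_eq_0)
  have "normalize_vlist (omode_vlist 3 U_terms) = []" by code_simp
  then show "Lvir 2 Uvec = 0"
    by (simp add: Lvir_def Uvec_eq_U_terms omode_vec_of vec_of_eq_0)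
  have "normalize_vlist (omode_vlist 1 U_terms @ scale_vlist (-1, 1) (scale_vlist (3, 1) U_terms)) = []"
    by code_simp
  then show "Lvir 0 Uvec = smul 3 Uvec"
    by (simp add: Lvir_def Uvec_eq_U_terms omode_vec_of vec_of_eq vec_of_scale frac_val_def)
qed

lemma alpha_in_rootlat: "alpha j \<in> rootlat"
  unfolding rootlat_def by (auto simp: fun_eq_iff intro!: exI[where x = "\<lambda>k. of_bool (k = j)"])

lemma rootlat_diff: "x \<in> rootlat \<Longrightarrow> y \<in> rootlat \<Longrightarrow> x - y \<in> rootlat"
proof -
  assume "x \<in> rootlat" "y \<in> rootlat"
  then obtain c d
    where "x = (\<lambda>i. \<Sum>j\<in>UNIV. c j * alpha j i)" "y = (\<lambda>i. \<Sum>j\<in>UNIV. d j * alpha j i)"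
    unfolding rootlat_def by blast
  then show ?thesis
    by (auto simp: rootlat_def fun_eq_iff left_diff_distrib sum_subtractf
        intro!: exI[where x = "\<lambda>j. c j - d j"])
qed

lemma zero_in_rootlat: "0 \<in> rootlat"
  using rootlat_diff[OF alpha_in_rootlat[of L1] alpha_in_rootlat[of L1]] by simp

lemma rootlat_uminus: "x \<in> rootlat \<Longrightarrow> - x \<in> rootlat"
  using rootlat_diff[OF zero_in_rootlat] by simp

lemma rootlat_add: "x \<in> rootlat \<Longrightarrow> y \<in> rootlat \<Longrightarrow> x + y \<in> rootlat"
  using rootlat_diff[OF _ rootlat_uminus] by fastforce

lemma gamma_in_rootlat: "gamma1 \<in> rootlat" "gamma2 \<in> rootlat" "gamma3 \<in> rootlat"
  by (simp_all add: gamma1_def gamma2_def gamma3_def rootlat_diff rootlat_add alpha_in_rootlat)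

lemma Proj_uminus: "Proj (- \<nu>) = - Proj \<nu>"
  by (simp add: Proj_def tau_def fun_eq_iff divide_simps)

lemma Proj_gamma: "Proj 0 = 0" "Proj gamma1 = 0" "Proj gamma2 = 0" "Proj gamma3 = 0"
  by (simp_all add: gamma_lc gamma1_lc_def gamma2_lc_def gamma3_lc_def Proj_def tau_def fun_eq_iff
      split: ix.split)

theorem lemma6p4:
  shows "Uvec \<noteq> 0
    \<and> (\<forall>b. Uvec b \<noteq> 0 \<longrightarrow> snd b \<in> rootlat)
    \<and> lowtheta Uvec = 0
    \<and> beta1 Uvec = 0 \<and> beta2 Uvec = 0 \<and> beta3 Uvec = 0 \<and> beta4 Uvec = 0
    \<and> Lvir 1 Uvec = 0 \<and> Lvir 2 Uvec = 0
    \<and> Lvir 0 Uvec = smul 3 Uvec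
    \<and> (\<forall>b. Uvec b \<noteq> 0 \<longrightarrow> Proj (snd b) = 0)"
proof -
  have "Uvec \<noteq> 0"
    using Uvec_coeff by (intro notI) (simp add: zero_fun_def)
  moreover have "snd b \<in> rootlat \<and> Proj (snd b) = 0" if "Uvec b \<noteq> 0" for b
    using Uvec_support[OF that]
    by (auto simp: zero_in_rootlat gamma_in_rootlat rootlat_uminus Proj_uminus Proj_gamma)
  ultimately show ?thesis
    using lowtheta_Uvec beta_Uvec Lvir_Uvec by blast
qed

end
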